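(* Let $U$ be an isometry of $\mathbb{C}^{N\times N}$ or of $\ell^2(\mathbb{N})$, $\mathbf{N}=(N_1,\dots,N_r)$, $\mathbf{M}=(M_1,\dots,M_r)$ with $1\le N_1<\dots<N_r$, $1\le M_1<\dots<M_r$, and $\mathbf{s}=(s_1,\dots,s_r)\in\mathbb{N}^r$. Then for $k,l=1,\dots,r$, $$\kappa_{\mathbf{N},\mathbf{M}}(k,l)\le\min\Big\{\mu_{\mathbf{N},\mathbf{M}}(k,l)\cdot s_l,\ \sqrt{s_l\,\mu(P^{N_{k-1}}_{N_k}U)}\cdot\|P^{N_{k-1}}_{N_k}UP^{M_{l-1}}_{M_l}\|\Big\},$$ and, in the case $U\in\mathcal{B}(\ell^2(\mathbb{N}))$, for $k=1,\dots,r$, $$\kappa_{\mathbf{N},\mathbf{M}}(k,\infty)\le\min\Big\{\mu_{\mathbf{N},\mathbf{M}}(k,\infty)\cdot s_r,\ \sqrt{s_r\,\mu(P^{N_{k-1}}_{N_k}U)}\cdot\|P^{N_{k-1}}_{N_k}UP^\perp_{M_{r-1}}\|\Big\}.$$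
   Context: $N_0=M_0=0$. $P^a_b$ projects onto $\mathrm{span}\{e_{a+1},\dots,e_b\}$, $P^\perp_K=I-P_K$ with $P_K$ the projection onto the first $K$ coordinates. $\mu(A)=\sup_{i,j}|a_{ij}|^2$. $\mu_{\mathbf{N},\mathbf{M}}(k,l)=\sqrt{\mu(P^{N_{k-1}}_{N_k}UP^{M_{l-1}}_{M_l})\mu(P^{N_{k-1}}_{N_k}U)}$, $\mu_{\mathbf{N},\mathbf{M}}(k,\infty)=\sqrt{\mu(P^{N_{k-1}}_{N_k}UP^\perp_{M_{r-1}})\mu(P^{N_{k-1}}_{N_k}U)}$. With $\Theta=\{\eta:\|\eta\|_{\ell^\infty}\le1,\ |\mathrm{supp}(P^{M_{l-1}}_{M_l}\eta)|=s_l\ (l=1,\dots,r-1),\ |\mathrm{supp}(P^\perp_{M_{r-1}}\eta)|=s_r\}$, define $\kappa_{\mathbf{N},\mathbf{M}}(k,l)=\max_{\eta\in\Theta}\|P^{N_{k-1}}_{N_k}UP^{M_{l-1}}_{M_l}\eta\|_{\ell^\infty}\sqrt{\mu(P^{N_{k-1}}_{N_k}U)}$ and $\kappa_{\mathbf{N},\mathbf{M}}(k,\infty)=\max_{\eta\in\Theta}\|P^{N_{k-1}}_{N_k}UP^\perp_{M_{r-1}}\eta\|_{\ell^\infty}\sqrt{\mu(P^{N_{k-1}}_{N_k}U)}$. *)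

theory Defs
  imports "HOL-Analysis.Analysis"
begin

text \<open>An operator U on C^n or on l^2(N) is represented by its matrix
  u i j (0-based: coordinate index a corresponds to the basis vector e_(a+1)).
  The index set D is either {..<n} (the space C^n) or UNIV (the space l^2(N));
  entries outside D x D are zero.  The projection P^a_b onto span{e_(a+1),...,e_b}
  thus corresponds to the coordinate set {a..<b}, and P^perp_K to {K..}.\<close>

definition is_isometry_matrix :: "nat set \<Rightarrow> (nat \<Rightarrow> nat \<Rightarrow> complex) \<Rightarrow> bool" where
  "is_isometry_matrix D u \<longleftrightarrow>
     (\<forall>i j. (i \<notin> D \<or> j \<notin> D) \<longrightarrow> u i j = 0) \<and>
     (\<forall>j\<in>D. \<forall>j'\<in>D. ((\<lambda>i. cnj (u i j) * u i j') has_sum (if j = j' then 1 else 0)) UNIV)"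

definition mu_sub :: "(nat \<Rightarrow> nat \<Rightarrow> complex) \<Rightarrow> nat set \<Rightarrow> nat set \<Rightarrow> real" where
  "mu_sub u R C = (SUP ij \<in> R \<times> C. (cmod (u (fst ij) (snd ij)))\<^sup>2)"

text \<open>Operator norm of P_R U P_C (R finite): supremum of the l^2 norm of P_R U P_C x
  over finitely supported x with l^2 norm at most 1 (dense in l^2).\<close>
definition op_norm_sub :: "(nat \<Rightarrow> nat \<Rightarrow> complex) \<Rightarrow> nat set \<Rightarrow> nat set \<Rightarrow> real" where
  "op_norm_sub u R C = Sup {sqrt (\<Sum>i\<in>R. (cmod (\<Sum>j\<in>{j. x j \<noteq> 0}. u i j * x j))\<^sup>2) | x.
      finite {j. x j \<noteq> 0} \<and> {j. x j \<noteq> 0} \<subseteq> C \<and> (\<Sum>j\<in>{j. x j \<noteq> 0}. (cmod (x j))\<^sup>2) \<le> 1}"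

definition Theta :: "nat set \<Rightarrow> (nat \<Rightarrow> nat) \<Rightarrow> nat \<Rightarrow> (nat \<Rightarrow> nat) \<Rightarrow> (nat \<Rightarrow> complex) set" where
  "Theta D M r s = {\<eta>. (\<forall>j. j \<notin> D \<longrightarrow> \<eta> j = 0) \<and> (\<forall>j. cmod (\<eta> j) \<le> 1) \<and>
      (\<forall>l\<in>{1..r-1}. card {j \<in> {M (l-1)..<M l}. \<eta> j \<noteq> 0} = s l) \<and>
      finite {j. M (r-1) \<le> j \<and> \<eta> j \<noteq> 0} \<and> card {j. M (r-1) \<le> j \<and> \<eta> j \<noteq> 0} = s r}"

text \<open>kappa for the row level k and column coordinate set C
  (C = {M(l-1)..<M l} gives kappa(k,l), C = {M(r-1)..} gives kappa(k,infinity)).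
  The l^infinity norm of P^{N(k-1)}_{N k} U P_C eta is a max over the finite row block.\<close>
definition kappa :: "(nat \<Rightarrow> nat \<Rightarrow> complex) \<Rightarrow> nat set \<Rightarrow> (nat \<Rightarrow> nat) \<Rightarrow> (nat \<Rightarrow> nat) \<Rightarrow> nat \<Rightarrow>
                     (nat \<Rightarrow> nat) \<Rightarrow> nat \<Rightarrow> nat set \<Rightarrow> real" where
  "kappa u D N M r s k C =
     (SUP \<eta> \<in> Theta D M r s.
        Max ((\<lambda>i. cmod (\<Sum>j\<in>{j \<in> C. \<eta> j \<noteq> 0}. u i j * \<eta> j)) ` {N (k-1)..<N k}))
     * sqrt (mu_sub u {N (k-1)..<N k} D)"

definition mu_NM :: "(nat \<Rightarrow> nat \<Rightarrow> complex) \<Rightarrow> nat set \<Rightarrow> (nat \<Rightarrow> nat) \<Rightarrow> nat \<Rightarrow> nat set \<Rightarrow> real" where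
  "mu_NM u D N k C = sqrt (mu_sub u {N (k-1)..<N k} C * mu_sub u {N (k-1)..<N k} D)"

end

theory Submission
  imports Defs
begin

text \<open>An entry of \<open>P_R U P_C \<eta>\<close> with \<open>\<eta> \<in> \<Theta>\<close> is a sum of at most \<open>s\<close> terms
  \<open>u\<^sub>i\<^sub>j \<eta>\<^sub>j\<close> with \<open>|\<eta>\<^sub>j| \<le> 1\<close>. Bounding every term by \<open>sqrt \<mu>(P_R U P_C)\<close> gives the
  first bound; rescaling \<eta> to the unit vector \<open>\<eta> / sqrt s\<close> gives the second, since a single
  coordinate of \<open>P_R U P_C x\<close> is at most its norm. The only analytic input from the isometry
  is that its rows have \<open>l\<^sup>2\<close> norm at most 1. Since \<open>\<kappa>\<close> is a supremum over \<open>\<Theta>\<close>, one also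
  needs \<open>\<Theta> \<noteq> {}\<close> (the supremum of the empty set is a junk value).\<close>

lemma has_sum_sum:
  fixes f :: "'i \<Rightarrow> 'a \<Rightarrow> 'b::topological_comm_monoid_add"
  assumes "finite I" "\<And>i. i \<in> I \<Longrightarrow> (f i has_sum a i) A"
  shows "((\<lambda>x. \<Sum>i\<in>I. f i x) has_sum (\<Sum>i\<in>I. a i)) A"
  using assms by (induction I rule: finite_induct) (simp_all add: has_sum_add)

lemma isometry_norm_has_sum:
  assumes iso: "is_isometry_matrix D u" and "finite F" "F \<subseteq> D"
  shows "((\<lambda>t. (cmod (\<Sum>j\<in>F. u t j * c j))\<^sup>2) has_sum (\<Sum>j\<in>F. (cmod (c j))\<^sup>2)) UNIV"
proof -
  define w where "w t = (\<Sum>j\<in>F. u t j * c j)" for t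
  have orth: "((\<lambda>t. cnj (u t a) * u t b) has_sum (if a = b then 1 else 0)) UNIV"
    if "a \<in> F" "b \<in> F" for a b
    using iso \<open>F \<subseteq> D\<close> that unfolding is_isometry_matrix_def by blast
  have "((\<lambda>t. \<Sum>a\<in>F. \<Sum>b\<in>F. c b * cnj (c a) * (cnj (u t a) * u t b))
      has_sum (\<Sum>a\<in>F. \<Sum>b\<in>F. c b * cnj (c a) * (if a = b then 1 else 0))) UNIV"
    using \<open>finite F\<close> by (intro has_sum_sum has_sum_cmult_right orth)
  moreover have "(\<Sum>a\<in>F. \<Sum>b\<in>F. c b * cnj (c a) * (cnj (u t a) * u t b)) = cnj (w t) * w t" for t
    unfolding w_def cnj_sum sum_product by (intro sum.cong refl) (simp add: algebra_simps)
  moreover have "(\<Sum>a\<in>F. \<Sum>b\<in>F. c b * cnj (c a) * (if a = b then 1 else 0))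
      = of_real (\<Sum>a\<in>F. (cmod (c a))\<^sup>2)"
    using \<open>finite F\<close> unfolding of_real_sum complex_norm_square
    by (simp add: if_distrib sum.delta cong: if_cong)
  ultimately have "((\<lambda>t. Re (cnj (w t) * w t)) has_sum (\<Sum>a\<in>F. (cmod (c a))\<^sup>2)) UNIV"
    using has_sum_Re by fastforce
  moreover have "Re (cnj (w t) * w t) = (cmod (w t))\<^sup>2" for t
    using complex_norm_square[of "w t"] by (metis Re_complex_of_real mult.commute)
  ultimately show ?thesis unfolding w_def by simp
qed

lemma isometry_row_norm_le_1:
  assumes iso: "is_isometry_matrix D u" and "finite F"
  shows "(\<Sum>j\<in>F. (cmod (u i j))\<^sup>2) \<le> 1"
proof -
  have zero: "u i j = 0" if "j \<notin> D" for j
    using iso that unfolding is_isometry_matrix_def by blast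
  define A where "A = (\<Sum>j\<in>F \<inter> D. (cmod (u i j))\<^sup>2)"
  have A_eq: "A = (\<Sum>j\<in>F. (cmod (u i j))\<^sup>2)"
    unfolding A_def using \<open>finite F\<close> zero by (intro sum.mono_neutral_left) auto
  \<comment> \<open>Apply U to the conjugate of row i on \<open>F \<inter> D\<close>: the i-th coordinate of the image is A,
    while its squared norm is A, so \<open>A\<^sup>2 \<le> A\<close>.\<close>
  have "(\<Sum>j\<in>F \<inter> D. u i j * cnj (u i j)) = of_real A"
    unfolding A_def of_real_sum complex_norm_square ..
  then have "A\<^sup>2 = (cmod (\<Sum>j\<in>F \<inter> D. u i j * cnj (u i j)))\<^sup>2"
    by simp
  also have "\<dots> \<le> A"
    using finite_sum_le_has_sum[OF isometry_norm_has_sum[OF iso, of "F \<inter> D" "\<lambda>j. cnj (u i j)"], of "{i}"]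
      \<open>finite F\<close> by (simp add: A_def)
  finally have "A\<^sup>2 \<le> A" .
  then have "A \<le> 1"
    using mult_le_cancel_left1[of A A] by (auto simp: power2_eq_square)
  with A_eq show ?thesis by simp
qed

lemma norm_entry_le_1:
  assumes "\<And>i F. finite F \<Longrightarrow> (\<Sum>j\<in>F. (cmod (u i j))\<^sup>2) \<le> 1"
  shows "cmod (u i j) \<le> 1"
  using assms[of "{j}" i] by (simp add: power_le_one_iff abs_le_square_iff)

lemma norm_entry_le_sqrt_mu_sub:
  assumes bounded: "\<And>i j. cmod (u i j) \<le> 1" and "i \<in> R" "j \<in> C"
  shows "cmod (u i j) \<le> sqrt (mu_sub u R C)"
proof -
  have bdd: "bdd_above ((\<lambda>ij. (cmod (u (fst ij) (snd ij)))\<^sup>2) ` (R \<times> C))"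
    using bounded by (intro bdd_aboveI[where M = 1]) (auto intro: power_le_one)
  then have "(cmod (u i j))\<^sup>2 \<le> mu_sub u R C"
    unfolding mu_sub_def using cSUP_upper[OF _ bdd, of "(i, j)"] assms(2,3) by simp
  then show ?thesis by (simp add: real_le_rsqrt)
qed

lemma mu_sub_nonneg:
  assumes "\<And>i j. cmod (u i j) \<le> 1" and "R \<noteq> {}" "C \<noteq> {}"
  shows "0 \<le> mu_sub u R C"
proof -
  obtain i j where "i \<in> R" "j \<in> C" using assms(2,3) by blast
  then have "0 \<le> sqrt (mu_sub u R C)"
    using norm_entry_le_sqrt_mu_sub[OF assms(1)] norm_ge_zero order_trans by meson
  then show ?thesis by simp
qed

lemma norm_sum_le_card_mul_sqrt_mu_sub:
  assumes bounded: "\<And>i j. cmod (u i j) \<le> 1" and "i \<in> R" "S \<subseteq> C"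
    and \<eta>: "\<And>j. cmod (\<eta> j) \<le> 1"
  shows "cmod (\<Sum>j\<in>S. u i j * \<eta> j) \<le> card S * sqrt (mu_sub u R C)"
proof -
  have "cmod (\<Sum>j\<in>S. u i j * \<eta> j) \<le> (\<Sum>j\<in>S. cmod (u i j) * cmod (\<eta> j))"
    using norm_sum[of "\<lambda>j. u i j * \<eta> j" S] by (simp add: norm_mult)
  also have "\<dots> \<le> (\<Sum>j\<in>S. sqrt (mu_sub u R C))"
  proof (rule sum_mono)
    fix j assume "j \<in> S"
    then have "cmod (u i j) \<le> sqrt (mu_sub u R C)"
      using assms(2,3) \<open>j \<in> S\<close> by (intro norm_entry_le_sqrt_mu_sub[OF bounded]) auto
    moreover have "cmod (u i j) * cmod (\<eta> j) \<le> cmod (u i j)"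
      using \<eta>[of j] by (simp add: mult_left_le)
    ultimately show "cmod (u i j) * cmod (\<eta> j) \<le> sqrt (mu_sub u R C)" by linarith
  qed
  finally show ?thesis by simp
qed

lemma norm_sum_mult_le_1:
  fixes a b :: "'i \<Rightarrow> complex"
  assumes "(\<Sum>j\<in>F. (cmod (a j))\<^sup>2) \<le> 1" "(\<Sum>j\<in>F. (cmod (b j))\<^sup>2) \<le> 1"
  shows "cmod (\<Sum>j\<in>F. a j * b j) \<le> 1"
proof -
  have "cmod (\<Sum>j\<in>F. a j * b j) \<le> (\<Sum>j\<in>F. cmod (a j) * cmod (b j))"
    using norm_sum[of "\<lambda>j. a j * b j" F] by (simp add: norm_mult)
  also have "\<dots> \<le> 1"
  proof -
    have "(\<Sum>j\<in>F. cmod (a j) * cmod (b j))\<^sup>2 \<le> 1"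
      using Cauchy_Schwarz_ineq_sum[of "\<lambda>j. cmod (a j)" "\<lambda>j. cmod (b j)" F]
        mult_le_one[OF assms(1) sum_nonneg assms(2)] by simp
    then show ?thesis using power2_le_imp_le[of _ 1] by simp
  qed
  finally show ?thesis .
qed

lemma norm_image_le_op_norm_sub:
  assumes row: "\<And>i F. finite F \<Longrightarrow> (\<Sum>j\<in>F. (cmod (u i j))\<^sup>2) \<le> 1" and "finite R"
    and x: "finite {j. x j \<noteq> 0}" "{j. x j \<noteq> 0} \<subseteq> C" "(\<Sum>j\<in>{j. x j \<noteq> 0}. (cmod (x j))\<^sup>2) \<le> 1"
  shows "sqrt (\<Sum>i\<in>R. (cmod (\<Sum>j\<in>{j. x j \<noteq> 0}. u i j * x j))\<^sup>2) \<le> op_norm_sub u R C"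
  unfolding op_norm_sub_def
proof (rule cSup_upper)
  show "bdd_above {sqrt (\<Sum>i\<in>R. (cmod (\<Sum>j\<in>{j. y j \<noteq> 0}. u i j * y j))\<^sup>2) | y.
      finite {j. y j \<noteq> 0} \<and> {j. y j \<noteq> 0} \<subseteq> C \<and> (\<Sum>j\<in>{j. y j \<noteq> 0}. (cmod (y j))\<^sup>2) \<le> 1}"
  proof (rule bdd_aboveI, safe)
    fix y :: "nat \<Rightarrow> complex" assume y: "finite {j. y j \<noteq> 0}" "(\<Sum>j\<in>{j. y j \<noteq> 0}. (cmod (y j))\<^sup>2) \<le> 1"
    have "(\<Sum>i\<in>R. (cmod (\<Sum>j\<in>{j. y j \<noteq> 0}. u i j * y j))\<^sup>2) \<le> (\<Sum>i\<in>R. 1)"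
      using row[OF y(1)] y(2) by (intro sum_mono power_le_one norm_ge_zero norm_sum_mult_le_1)
    then show "sqrt (\<Sum>i\<in>R. (cmod (\<Sum>j\<in>{j. y j \<noteq> 0}. u i j * y j))\<^sup>2) \<le> sqrt (card R)"
      by simp
  qed
qed (use x in blast)

lemma op_norm_sub_nonneg:
  assumes "\<And>i F. finite F \<Longrightarrow> (\<Sum>j\<in>F. (cmod (u i j))\<^sup>2) \<le> 1" and "finite R"
  shows "0 \<le> op_norm_sub u R C"
  using norm_image_le_op_norm_sub[OF assms, of "\<lambda>_. 0"] by simp

lemma norm_sum_le_sqrt_card_mul_op_norm_sub:
  assumes row: "\<And>i F. finite F \<Longrightarrow> (\<Sum>j\<in>F. (cmod (u i j))\<^sup>2) \<le> 1" and "finite R" "i \<in> R"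
    and S: "finite S" "S \<subseteq> C" and \<eta>: "\<And>j. cmod (\<eta> j) \<le> 1"
  shows "cmod (\<Sum>j\<in>S. u i j * \<eta> j) \<le> sqrt (card S) * op_norm_sub u R C"
proof (cases "S = {}")
  case True
  then show ?thesis using op_norm_sub_nonneg[OF row \<open>finite R\<close>] by simp
next
  case False
  define c where "c = sqrt (card S)"
  have "c > 0" using False S(1) by (simp add: c_def card_gt_0_iff)
  define x where "x j = (if j \<in> S then \<eta> j / c else 0)" for j
  have supp: "{j. x j \<noteq> 0} = {j \<in> S. \<eta> j \<noteq> 0}"
    using \<open>c > 0\<close> by (auto simp: x_def)
  have image: "(\<Sum>j\<in>{j. x j \<noteq> 0}. u i j * x j) = (\<Sum>j\<in>S. u i j * \<eta> j) / c"
    unfolding supp sum_divide_distrib using S(1)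
    by (intro sum.mono_neutral_cong_left) (auto simp: x_def)
  have "(\<Sum>j\<in>{j. x j \<noteq> 0}. (cmod (x j))\<^sup>2) \<le> 1"
  proof -
    have "(\<Sum>j\<in>{j. x j \<noteq> 0}. (cmod (x j))\<^sup>2) \<le> (\<Sum>j\<in>S. (cmod (x j))\<^sup>2)"
      unfolding supp using S(1) by (intro sum_mono2) auto
    also have "\<dots> \<le> (\<Sum>j\<in>S. 1 / c\<^sup>2)"
      using \<eta> by (intro sum_mono) (auto simp: x_def norm_divide power_divide intro!: divide_right_mono power_le_one)
    also have "\<dots> = 1" using \<open>c > 0\<close> by (simp add: c_def)
    finally show ?thesis .
  qed
  then have "sqrt (\<Sum>i'\<in>R. (cmod (\<Sum>j\<in>{j. x j \<noteq> 0}. u i' j * x j))\<^sup>2) \<le> op_norm_sub u R C"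
    using S supp by (intro norm_image_le_op_norm_sub[OF row \<open>finite R\<close>]) auto
  moreover have "cmod (\<Sum>j\<in>{j. x j \<noteq> 0}. u i j * x j)
      \<le> sqrt (\<Sum>i'\<in>R. (cmod (\<Sum>j\<in>{j. x j \<noteq> 0}. u i' j * x j))\<^sup>2)"
    using \<open>finite R\<close> \<open>i \<in> R\<close> by (intro real_le_rsqrt member_le_sum) auto
  ultimately have "cmod (\<Sum>j\<in>S. u i j * \<eta> j) / c \<le> op_norm_sub u R C"
    using \<open>c > 0\<close> by (simp add: image norm_divide)
  then show ?thesis using \<open>c > 0\<close> by (simp add: c_def field_simps)
qed

lemma Theta_norm_le_1: "\<eta> \<in> Theta D M r s \<Longrightarrow> cmod (\<eta> j) \<le> 1"
  unfolding Theta_def by blast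

lemma norm_sum_le_sparsity_bounds:
  assumes row: "\<And>i F. finite F \<Longrightarrow> (\<Sum>j\<in>F. (cmod (u i j))\<^sup>2) \<le> 1"
    and R: "finite R" "i \<in> R" "R \<noteq> {}" and "C \<noteq> {}"
    and S: "finite S" "S \<subseteq> C" "card S \<le> sl" and \<eta>: "\<And>j. cmod (\<eta> j) \<le> 1"
  shows "cmod (\<Sum>j\<in>S. u i j * \<eta> j) \<le> real sl * sqrt (mu_sub u R C)"
    and "cmod (\<Sum>j\<in>S. u i j * \<eta> j) \<le> sqrt (real sl) * op_norm_sub u R C"
proof -
  have bounded: "cmod (u i' j) \<le> 1" for i' j
    by (rule norm_entry_le_1) (rule row)
  have "cmod (\<Sum>j\<in>S. u i j * \<eta> j) \<le> card S * sqrt (mu_sub u R C)"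
    using norm_sum_le_card_mul_sqrt_mu_sub[OF bounded R(2) S(2)] \<eta> .
  also have "\<dots> \<le> real sl * sqrt (mu_sub u R C)"
    using S(3) mu_sub_nonneg[OF bounded R(3) \<open>C \<noteq> {}\<close>] by (intro mult_right_mono) auto
  finally show "cmod (\<Sum>j\<in>S. u i j * \<eta> j) \<le> real sl * sqrt (mu_sub u R C)" .
  have "cmod (\<Sum>j\<in>S. u i j * \<eta> j) \<le> sqrt (card S) * op_norm_sub u R C"
    using R(1,2) S(1,2) \<eta> by (intro norm_sum_le_sqrt_card_mul_op_norm_sub row)
  also have "\<dots> \<le> sqrt (real sl) * op_norm_sub u R C"
    using S(3) op_norm_sub_nonneg[OF row R(1)] by (intro mult_right_mono) auto
  finally show "cmod (\<Sum>j\<in>S. u i j * \<eta> j) \<le> sqrt (real sl) * op_norm_sub u R C" .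
qed

lemma kappa_le_min:
  assumes iso: "is_isometry_matrix D u" and "N (k-1) < N k" "C \<noteq> {}" "D \<noteq> {}"
    and "Theta D M r s \<noteq> {}"
    and supp: "\<And>\<eta>. \<eta> \<in> Theta D M r s \<Longrightarrow> finite {j \<in> C. \<eta> j \<noteq> 0} \<and> card {j \<in> C. \<eta> j \<noteq> 0} \<le> sl"
  shows "kappa u D N M r s k C
    \<le> min (mu_NM u D N k C * real sl)
          (sqrt (real sl * mu_sub u {N (k-1)..<N k} D) * op_norm_sub u {N (k-1)..<N k} C)"
proof -
  define R where "R = {N (k-1)..<N k}"
  have R: "finite R" "R \<noteq> {}" using \<open>N (k-1) < N k\<close> by (auto simp: R_def)
  have "cmod (u i j) \<le> 1" for i j
    by (rule norm_entry_le_1) (rule isometry_row_norm_le_1[OF iso])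
  then have mD: "0 \<le> mu_sub u R D"
    using mu_sub_nonneg R \<open>D \<noteq> {}\<close> by blast
  define g where "g \<eta> = Max ((\<lambda>i. cmod (\<Sum>j\<in>{j \<in> C. \<eta> j \<noteq> 0}. u i j * \<eta> j)) ` R)" for \<eta>
  have g_le: "g \<eta> \<le> real sl * sqrt (mu_sub u R C) \<and> g \<eta> \<le> sqrt (real sl) * op_norm_sub u R C"
    if "\<eta> \<in> Theta D M r s" for \<eta>
    using R supp[OF that] Theta_norm_le_1[OF that] \<open>C \<noteq> {}\<close>
      norm_sum_le_sparsity_bounds[OF isometry_row_norm_le_1[OF iso], of R _ C "{j \<in> C. \<eta> j \<noteq> 0}" sl \<eta>]
    by (auto simp: g_def)
  have sup_mu: "(SUP \<eta>\<in>Theta D M r s. g \<eta>) \<le> real sl * sqrt (mu_sub u R C)"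
    and sup_op: "(SUP \<eta>\<in>Theta D M r s. g \<eta>) \<le> sqrt (real sl) * op_norm_sub u R C"
    using g_le \<open>Theta D M r s \<noteq> {}\<close> by (auto intro: cSUP_least)
  have "kappa u D N M r s k C = (SUP \<eta>\<in>Theta D M r s. g \<eta>) * sqrt (mu_sub u R D)"
    by (simp add: kappa_def g_def R_def)
  then show ?thesis
    using mult_right_mono[OF sup_mu real_sqrt_ge_zero[OF mD]]
      mult_right_mono[OF sup_op real_sqrt_ge_zero[OF mD]]
    by (simp add: mu_NM_def R_def real_sqrt_mult ac_simps)
qed

lemma mono_upto_if_step_less:
  fixes M :: "nat \<Rightarrow> 'a::order"
  assumes step: "\<forall>l\<in>{1..r}. M (l-1) < M l" and "a \<le> b" "b \<le> r"
  shows "M a \<le> M b"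
  using \<open>a \<le> b\<close> \<open>b \<le> r\<close>
proof (induction b rule: dec_induct)
  case (step n)
  then have "Suc n \<in> {1..r}" by simp
  then have "M n < M (Suc n)" using assms(1) by fastforce
  with step show ?case by simp
qed simp

lemma level_unique:
  fixes M :: "nat \<Rightarrow> 'a::order" and l l' :: nat
  assumes step: "\<forall>l\<in>{1..r}. M (l-1) < M l" and "l \<in> {1..r}" "l' \<in> {1..r}"
    and "j \<in> {M (l-1)..<M l}" "j \<in> {M (l'-1)..<M l'}"
  shows "l = l'"
proof (rule ccontr)
  assume "l \<noteq> l'"
  then consider "l < l'" | "l' < l" by linarith
  then show False
  proof cases
    case 1
    have "M l \<le> M (l'-1)" by (rule mono_upto_if_step_less[OF step]) (use 1 assms(3) in auto)
    then show False using assms(4,5) by (meson atLeastLessThan_iff less_le_not_le order_trans)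
  next
    case 2
    have "M l' \<le> M (l-1)" by (rule mono_upto_if_step_less[OF step]) (use 2 assms(2) in auto)
    then show False using assms(4,5) by (meson atLeastLessThan_iff less_le_not_le order_trans)
  qed
qed

lemma Theta_level_support:
  assumes "\<eta> \<in> Theta D M r s" "l \<in> {1..r}"
  shows "card {j \<in> {M (l-1)..<M l}. \<eta> j \<noteq> 0} \<le> s l"
proof (cases "l = r")
  case True
  have "finite {j. M (r-1) \<le> j \<and> \<eta> j \<noteq> 0}" "card {j. M (r-1) \<le> j \<and> \<eta> j \<noteq> 0} = s r"
    using assms(1) unfolding Theta_def by auto
  moreover have "{j \<in> {M (l-1)..<M l}. \<eta> j \<noteq> 0} \<subseteq> {j. M (r-1) \<le> j \<and> \<eta> j \<noteq> 0}"
    using True by auto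
  ultimately show ?thesis using True card_mono by fastforce
next
  case False
  then have "l \<in> {1..r-1}" using assms(2) by auto
  with assms(1) show ?thesis unfolding Theta_def by auto
qed

lemma Theta_nonempty:
  assumes "r \<ge> 1" and step: "\<forall>l\<in>{1..r}. M (l-1) < M l"
    and s_le: "\<forall>l\<in>{1..r}. s l \<le> M l - M (l-1)" and D: "{..<M r} \<subseteq> D"
  shows "Theta D M r s \<noteq> {}"
proof -
  define B where "B l = {M (l-1)..<M (l-1) + s l}" for l
  define \<eta> where "\<eta> j = (if \<exists>l\<in>{1..r}. j \<in> B l then 1 else 0 :: complex)" for j
  have B_level: "B l \<subseteq> {M (l-1)..<M l}" if "l \<in> {1..r}" for l
    using s_le step that unfolding B_def by fastforce
  have level: "{j \<in> {M (l-1)..<M l}. \<eta> j \<noteq> 0} = B l" if l: "l \<in> {1..r}" for l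
  proof (intro set_eqI iffI)
    fix j assume "j \<in> {j \<in> {M (l-1)..<M l}. \<eta> j \<noteq> 0}"
    moreover obtain l' where "l' \<in> {1..r}" "j \<in> B l'"
      using calculation by (auto simp: \<eta>_def split: if_splits)
    moreover have "j \<in> {M (l'-1)..<M l'}" using B_level[OF \<open>l' \<in> _\<close>] \<open>j \<in> B l'\<close> by blast
    ultimately show "j \<in> B l"
      using level_unique[OF step l \<open>l' \<in> _\<close>] by auto
  next
    fix j assume "j \<in> B l"
    then show "j \<in> {j \<in> {M (l-1)..<M l}. \<eta> j \<noteq> 0}"
      using l B_level[OF l] by (auto simp: \<eta>_def)
  qed
  have below: "j < M r" if nonzero: "\<eta> j \<noteq> 0" for j
  proof -
    obtain l where "l \<in> {1..r}" "j \<in> B l" using nonzero by (auto simp: \<eta>_def split: if_splits)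
    then have "j < M l" using B_level by fastforce
    also have "M l \<le> M r" by (rule mono_upto_if_step_less[OF step]) (use \<open>l \<in> {1..r}\<close> in auto)
    finally show ?thesis .
  qed
  have "{j. M (r-1) \<le> j \<and> \<eta> j \<noteq> 0} = {j \<in> {M (r-1)..<M r}. \<eta> j \<noteq> 0}"
    using below by auto
  then have tail: "{j. M (r-1) \<le> j \<and> \<eta> j \<noteq> 0} = B r"
    using level[of r] \<open>r \<ge> 1\<close> by simp
  have "\<eta> j = 0" if "j \<notin> D" for j
    using below D that by fastforce
  moreover have "cmod (\<eta> j) \<le> 1" for j
    by (simp add: \<eta>_def)
  ultimately have "\<eta> \<in> Theta D M r s"
    unfolding Theta_def using level tail by (auto simp: B_def)
  then show ?thesis by blast
qed

theorem lemma7p5: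
  fixes u :: "nat \<Rightarrow> nat \<Rightarrow> complex" and D :: "nat set"
    and r :: nat and N M s :: "nat \<Rightarrow> nat"
  assumes space: "D = UNIV \<or> (\<exists>n. D = {..<n})"
    and iso: "is_isometry_matrix D u"
    and r_pos: "r \<ge> 1"
    and N0: "N 0 = 0" and M0: "M 0 = 0"
    and N_mono: "\<forall>k\<in>{1..r}. N (k-1) < N k"
    and M_mono: "\<forall>l\<in>{1..r}. M (l-1) < M l"
    and fin_dim: "\<forall>n. D = {..<n} \<longrightarrow> N r \<le> n \<and> M r \<le> n"
    and s_le: "\<forall>l\<in>{1..r}. s l \<le> M l - M (l-1)"
  shows "(\<forall>k\<in>{1..r}. \<forall>l\<in>{1..r}.
            kappa u D N M r s k {M (l-1)..<M l}
              \<le> min (mu_NM u D N k {M (l-1)..<M l} * real (s l))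
                     (sqrt (real (s l) * mu_sub u {N (k-1)..<N k} D)
                        * op_norm_sub u {N (k-1)..<N k} {M (l-1)..<M l}))
       \<and> (D = UNIV \<longrightarrow> (\<forall>k\<in>{1..r}.
            kappa u D N M r s k {M (r-1)..}
              \<le> min (mu_NM u D N k {M (r-1)..} * real (s r))
                     (sqrt (real (s r) * mu_sub u {N (k-1)..<N k} D)
                        * op_norm_sub u {N (k-1)..<N k} {M (r-1)..})))"
proof -
  have below: "{..<M r} \<subseteq> D" using space fin_dim by auto
  moreover have "M (r-1) < M r" using M_mono r_pos by simp
  ultimately have "D \<noteq> {}" by auto
  have Theta: "Theta D M r s \<noteq> {}" using Theta_nonempty[OF r_pos M_mono s_le below] .
  have "kappa u D N M r s k {M (l-1)..<M l}
      \<le> min (mu_NM u D N k {M (l-1)..<M l} * real (s l))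
            (sqrt (real (s l) * mu_sub u {N (k-1)..<N k} D) * op_norm_sub u {N (k-1)..<N k} {M (l-1)..<M l})"
    if "k \<in> {1..r}" "l \<in> {1..r}" for k l
    using that N_mono M_mono Theta_level_support[OF _ \<open>l \<in> _\<close>]
    by (intro kappa_le_min[OF iso _ _ \<open>D \<noteq> {}\<close> Theta]) auto
  moreover have "kappa u D N M r s k {M (r-1)..}
      \<le> min (mu_NM u D N k {M (r-1)..} * real (s r))
            (sqrt (real (s r) * mu_sub u {N (k-1)..<N k} D) * op_norm_sub u {N (k-1)..<N k} {M (r-1)..})"
    if "k \<in> {1..r}" for k
    using that N_mono by (intro kappa_le_min[OF iso _ _ \<open>D \<noteq> {}\<close> Theta]) (auto simp: Theta_def)
  ultimately show ?thesis by blast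
qed

end
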